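(* Let $n\ge 2$ and let $i,j$ be integers with $1\le i\le n-1$ and $0\le j\le n-1$. For every graph $G^*$ on $n$ vertices with at most one loop per vertex, with adjacency eigenvalues $\lambda_1\ge\lambda_2\ge\cdots\ge\lambda_n$, \[\lambda_{i+1}(G^* )-\lambda_{n-j}(G^* )\le \frac{n}{2}\sqrt{\frac{i+j+1}{i(j+1)}}.\] Consequently, $s_{i,j}\le \frac12\sqrt{\frac{i+j+1}{i(j+1)}}$.
   Context: A graph with at most one loop per vertex on vertex set $\{1,\dots,n\}$ is identified with its adjacency matrix $A=(a_{uv})$, a symmetric $n\times n$ $(0,1)$-matrix where $a_{uv}=1$ iff $uv$ is an edge and $a_{uu}=1$ iff there is a loop at $u$. Its eigenvalues (of $A$) are listed as $\lambda_1\ge\cdots\ge\lambda_n$. For a simple graph $G$ on $n$ vertices, ${\rm spread}_{i,j}(G)=\lambda_{i+1}(G)-\lambda_{n-j}(G)$; ${\rm spread}_{i,j}(n)$ is the maximum of ${\rm spread}_{i,j}(G)$ over all simple graphs $G$ on $n$ vertices, and $s_{i,j}=\lim_{n\to\infty}{\rm spread}_{i,j}(n)/n$ (this limit is known to exist). *)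

theory Defs
  imports "Jordan_Normal_Form.Char_Poly"
begin

text \<open>Adjacency matrix of a graph on vertex set of size n with at most one loop
  per vertex: a symmetric n x n (0,1)-matrix (diagonal entries = loops).\<close>
definition loop_graph_adj :: "nat \<Rightarrow> real mat \<Rightarrow> bool" where
  "loop_graph_adj n A \<longleftrightarrow> A \<in> carrier_mat n n \<and> transpose_mat A = A \<and>
     (\<forall>u<n. \<forall>v<n. A $$ (u,v) = 0 \<or> A $$ (u,v) = 1)"

definition simple_graph_adj :: "nat \<Rightarrow> real mat \<Rightarrow> bool" where
  "simple_graph_adj n A \<longleftrightarrow> loop_graph_adj n A \<and> (\<forall>u<n. A $$ (u,u) = 0)"

text \<open>The eigenvalues of A (roots of the characteristic polynomial, with
  multiplicity), listed in non-increasing order; entry k-1 is lambda_k.\<close>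
definition eigs :: "real mat \<Rightarrow> real list" where
  "eigs A = (THE xs. length xs = dim_row A \<and> sorted_wrt (\<ge>) xs \<and>
       char_poly A = prod_list (map (\<lambda>x. [:- x, 1:]) xs))"

definition eig :: "real mat \<Rightarrow> nat \<Rightarrow> real" where
  "eig A k = eigs A ! (k - 1)"

definition spread_graph :: "nat \<Rightarrow> nat \<Rightarrow> nat \<Rightarrow> real mat \<Rightarrow> real" where
  "spread_graph i j n A = eig A (i + 1) - eig A (n - j)"

definition spread_n :: "nat \<Rightarrow> nat \<Rightarrow> nat \<Rightarrow> real" where
  "spread_n i j n = Max {spread_graph i j n A | A. simple_graph_adj n A}"

end

theory Submission
  imports
    Defs
    "Jordan_Normal_Form.Schur_Decomposition"
    "HOL-Computational_Algebra.Fundamental_Theorem_Algebra"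
begin

text \<open>Let \<open>\<lambda>\<^sub>1 \<ge> ... \<ge> \<lambda>\<^sub>n\<close> be the eigenvalues of the 0/1 matrix \<open>A\<close>. As
  \<open>a\<^sup>2 = a\<close> for its entries, \<open>\<Sum>\<^sub>k \<lambda>\<^sub>k\<^sup>2 = tr (A\<^sup>2) = \<Sum>\<^sub>u\<^sub>v a\<^sub>u\<^sub>v = 1\<^sup>T A 1 \<le> n \<lambda>\<^sub>1\<close>, the last step
  being the Rayleigh bound for the all-ones vector. Keep in this sum only \<open>\<lambda>\<^sub>1\<close>, the \<open>i\<close>
  eigenvalues \<open>\<lambda>\<^sub>2, ..., \<lambda>\<^sub>i\<^sub>+\<^sub>1\<close>, whose squares are at least \<open>X\<^sup>2\<close> for \<open>X = max \<lambda>\<^sub>i\<^sub>+\<^sub>1 0\<close>, and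
  the \<open>j + 1\<close> smallest ones, whose squares are at least \<open>Y\<^sup>2\<close> for \<open>Y = max (- \<lambda>\<^sub>n\<^sub>-\<^sub>j) 0\<close>.
  This gives \<open>\<lambda>\<^sub>1\<^sup>2 + i X\<^sup>2 + (j + 1) Y\<^sup>2 \<le> n \<lambda>\<^sub>1\<close>, hence \<open>i X\<^sup>2 + (j + 1) Y\<^sup>2 \<le> n\<^sup>2/4\<close>, and
  Cauchy--Schwarz turns this into \<open>X + Y \<le> n/2 \<cdot> sqrt (1/i + 1/(j + 1))\<close>. Both spectral
  facts are read off an orthonormal diagonalisation of real symmetric matrices, obtained by
  deflating along a real eigenvector. The bound on \<open>spread\<^sub>i\<^sub>,\<^sub>j(m)/m\<close> for every large \<open>m\<close>
  passes to its limit.\<close>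

section \<open>Orthonormal diagonalisation of real symmetric matrices\<close>

definition orthonormal_mat :: "nat \<Rightarrow> real mat \<Rightarrow> bool" where
  "orthonormal_mat n U \<longleftrightarrow> U \<in> carrier_mat n n \<and> transpose_mat U * U = 1\<^sub>m n"

lemma orthonormal_mat_right_inverse:
  "orthonormal_mat n U \<Longrightarrow> U * transpose_mat U = 1\<^sub>m n"
  unfolding orthonormal_mat_def by (auto intro: mat_mult_left_right_inverse)

lemma orthonormal_mat_completion:
  fixes x :: "real vec"
  assumes x: "x \<in> carrier_vec n" and x0: "x \<noteq> 0\<^sub>v n"
  shows "\<exists>U. orthonormal_mat n U \<and> col U 0 = (1 / sqrt (x \<bullet> x)) \<cdot>\<^sub>v x"
proof -
  interpret cof_vec_space n "TYPE(real)" .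
  define b where "b = basis_completion x"
  define ws where "ws = gram_schmidt n b"
  from basis_completion[OF x x0, folded b_def]
  have dist_b: "distinct b" and indep: "\<not> lin_dep (set b)"
    and b: "set b \<subseteq> carrier_vec n" and hdb: "hd b = x" and len_b: "length b = n"
    by auto
  have n: "0 < n" using x x0 by (cases n) auto
  from hdb len_b n obtain vs where bv: "b = x # vs" by (cases b) auto
  from gram_schmidt_result[OF b dist_b indep refl, folded ws_def]
  have ws: "set ws \<subseteq> carrier_vec n" "corthogonal ws" "length ws = n"
    by (auto simp: len_b)
  have ws0: "ws ! 0 = x"
    using gram_schmidt_hd[OF x, of vs, folded bv ws_def] n ws(3) by (cases ws) auto
  define c where "c w = 1 / sqrt (w \<bullet> w)" for w :: "real vec"
  define U where "U = mat_of_cols n (map (\<lambda>w. c w \<cdot>\<^sub>v w) ws)"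
  have wsi: "i < n \<Longrightarrow> ws ! i \<in> carrier_vec n" for i using ws by auto
  have U: "U \<in> carrier_mat n n" unfolding U_def using ws(3) by auto
  have colU: "i < n \<Longrightarrow> col U i = c (ws ! i) \<cdot>\<^sub>v ws ! i" for i
    unfolding U_def using ws wsi by (subst col_mat_of_cols) auto
  have orth: "i < n \<Longrightarrow> j < n \<Longrightarrow> ws ! i \<bullet> ws ! j = 0 \<longleftrightarrow> i \<noteq> j" for i j
    using corthogonalD[OF ws(2), of i j] ws(3) by (simp add: scalar_prod_def)
  have "transpose_mat U * U = 1\<^sub>m n"
  proof (rule eq_matI)
    fix i j assume "i < dim_row (1\<^sub>m n)" and "j < dim_col (1\<^sub>m n)"
    hence i: "i < n" and j: "j < n" by auto
    have "(transpose_mat U * U) $$ (i, j) = c (ws ! i) * c (ws ! j) * (ws ! i \<bullet> ws ! j)"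
      using U i j colU[OF i] colU[OF j] wsi[OF i] wsi[OF j] by simp
    also have "\<dots> = 1\<^sub>m n $$ (i, j)"
    proof (cases "i = j")
      case True
      have "ws ! j \<bullet> ws ! j > 0"
        using orth[OF j j] conjugate_square_ge_0_vec[of "ws ! j"] by (simp add: dual_order.order_iff_strict)
      hence "c (ws ! j) * c (ws ! j) * (ws ! j \<bullet> ws ! j) = 1"
        unfolding c_def by (simp add: real_sqrt_mult[symmetric])
      then show ?thesis using True j by simp
    qed (use orth[OF i j] i j in simp)
    finally show "(transpose_mat U * U) $$ (i, j) = 1\<^sub>m n $$ (i, j)" .
  qed (use U in auto)
  moreover have "col U 0 = (1 / sqrt (x \<bullet> x)) \<cdot>\<^sub>v x"
    using colU[OF n] ws0 unfolding c_def by simp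
  ultimately show ?thesis using U unfolding orthonormal_mat_def by blast
qed

lemma conjugate_mult_mat_vec_of_real:
  fixes A :: "real mat" and v :: "complex vec"
  assumes "A \<in> carrier_mat n n" and "v \<in> carrier_vec n"
  shows "conjugate (map_mat of_real A *\<^sub>v v) = map_mat of_real A *\<^sub>v conjugate v"
proof (rule eq_vecI)
  fix i assume "i < dim_vec (map_mat of_real A *\<^sub>v conjugate v)"
  hence i: "i < n" using assms by simp
  let ?r = "row (map_mat complex_of_real A) i"
  have r: "?r \<in> carrier_vec n" and "conjugate ?r = ?r"
    using assms i by (auto intro!: eq_vecI)
  thus "conjugate (map_mat of_real A *\<^sub>v v) $ i = (map_mat of_real A *\<^sub>v conjugate v) $ i"
    using assms i conjugate_sprod_vec[OF r, of v] by simp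
qed (use assms in simp)

lemma cnj_eigenvalue_of_real_symmetric:
  fixes A :: "real mat" and z :: complex
  assumes A: "A \<in> carrier_mat n n" and sym: "transpose_mat A = A"
    and z: "eigenvalue (map_mat of_real A) z"
  shows "cnj z = z"
proof -
  let ?C = "map_mat complex_of_real A"
  have C: "?C \<in> carrier_mat n n" and symC: "transpose_mat ?C = ?C"
    using A sym by (auto simp: map_mat_transpose)
  obtain v where "eigenvector ?C v z" using z unfolding eigenvalue_def by blast
  hence v: "v \<in> carrier_vec n" and v0: "v \<noteq> 0\<^sub>v n" and Cv: "?C *\<^sub>v v = z \<cdot>\<^sub>v v"
    unfolding eigenvector_def using C by auto
  have "z * (v \<bullet>c v) = (?C *\<^sub>v v) \<bullet>c v"
    using v by (simp add: Cv)
  also have "\<dots> = v \<bullet>c (?C *\<^sub>v v)"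
  proof -
    have "(?C *\<^sub>v v) \<bullet>c v = (transpose_mat ?C *\<^sub>v v) \<bullet> conjugate v"
      using symC by simp
    also have "\<dots> = v \<bullet> (?C *\<^sub>v conjugate v)"
      by (rule transpose_vec_mult_scalar[OF C]) (use v in auto)
    finally show ?thesis using conjugate_mult_mat_vec_of_real[OF A v] by simp
  qed
  also have "\<dots> = cnj z * (v \<bullet>c v)"
    using v by (simp add: Cv conjugate_smult_vec)
  finally have "(z - cnj z) * (v \<bullet>c v) = 0" by (simp add: algebra_simps)
  moreover have "v \<bullet>c v \<noteq> 0" using v v0 conjugate_square_greater_0_vec[OF v] by auto
  ultimately show ?thesis by simp
qed

lemma real_symmetric_has_eigenvalue:
  fixes A :: "real mat"
  assumes A: "A \<in> carrier_mat n n" and sym: "transpose_mat A = A" and n: "0 < n"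
  shows "\<exists>e. eigenvalue A e"
proof -
  let ?C = "map_mat complex_of_real A"
  have C: "?C \<in> carrier_mat n n" using A by simp
  have "degree (char_poly ?C) = n" using degree_monic_char_poly[OF C] by simp
  hence "\<not> constant (poly (char_poly ?C))" using n constant_degree[of "char_poly ?C"] by simp
  then obtain z where "poly (char_poly ?C) z = 0" using fundamental_theorem_of_algebra by blast
  hence z: "eigenvalue ?C z" using eigenvalue_root_char_poly[OF C] by simp
  have "z = of_real (Re z)"
    using cnj_eigenvalue_of_real_symmetric[OF A sym z] by (simp add: complex_eq_iff)
  hence "eigenvalue ?C (of_real (Re z))" using z by simp
  hence "poly (char_poly A) (Re z) = 0"
    unfolding eigenvalue_root_char_poly[OF C] of_real_hom.char_poly_hom[OF A] by simp
  thus ?thesis using eigenvalue_root_char_poly[OF A] by blast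
qed

lemma orthonormal_mat_mult:
  assumes "orthonormal_mat n U" and "orthonormal_mat n P"
  shows "orthonormal_mat n (U * P)"
proof -
  have U: "U \<in> carrier_mat n n" and P: "P \<in> carrier_mat n n"
    using assms unfolding orthonormal_mat_def by auto
  have "transpose_mat (U * P) * (U * P) = transpose_mat P * (transpose_mat U * U) * P"
    using U P by (simp add: transpose_mult[OF U P] assoc_mult_mat[of _ n n _ n _ n])
  also have "\<dots> = 1\<^sub>m n" using assms P unfolding orthonormal_mat_def by simp
  finally show ?thesis using U P unfolding orthonormal_mat_def by simp
qed

lemma orthonormal_mat_block_diag_one:
  assumes "orthonormal_mat m V"
  shows "orthonormal_mat (Suc m) (four_block_mat (1\<^sub>m 1) (0\<^sub>m 1 m) (0\<^sub>m m 1) V)"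
proof -
  have V: "V \<in> carrier_mat m m" and VtV: "transpose_mat V * V = 1\<^sub>m m"
    using assms unfolding orthonormal_mat_def by auto
  let ?P = "four_block_mat (1\<^sub>m 1) (0\<^sub>m 1 m) (0\<^sub>m m 1) V"
  have "transpose_mat ?P = four_block_mat (1\<^sub>m 1) (0\<^sub>m 1 m) (0\<^sub>m m 1) (transpose_mat V)"
    using transpose_four_block_mat[OF one_carrier_mat zero_carrier_mat zero_carrier_mat V] by simp
  hence "transpose_mat ?P * ?P = four_block_mat (1\<^sub>m 1) (0\<^sub>m 1 m) (0\<^sub>m m 1) (1\<^sub>m m)"
    using V VtV by (simp add: mult_four_block_mat[OF one_carrier_mat zero_carrier_mat
          zero_carrier_mat _ one_carrier_mat zero_carrier_mat zero_carrier_mat V])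
  moreover have "?P \<in> carrier_mat (1 + m) (1 + m)"
    by (rule four_block_carrier_mat[OF one_carrier_mat V])
  ultimately show ?thesis using V unfolding orthonormal_mat_def by simp
qed

lemma mult_four_block_diag_mat:
  assumes "A1 \<in> carrier_mat n n" "D1 \<in> carrier_mat m m" "A2 \<in> carrier_mat n n" "D2 \<in> carrier_mat m m"
  shows "four_block_mat A1 (0\<^sub>m n m) (0\<^sub>m m n) D1 * four_block_mat A2 (0\<^sub>m n m) (0\<^sub>m m n) D2
       = four_block_mat (A1 * A2) (0\<^sub>m n m) (0\<^sub>m m n) (D1 * D2)"
  using mult_four_block_mat[OF assms(1) zero_carrier_mat zero_carrier_mat assms(2)
      assms(3) zero_carrier_mat zero_carrier_mat assms(4)] assms
  by simp

lemma symmetric_mat_first_col_block: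
  fixes S :: "'a :: comm_ring_1 mat"
  assumes S: "S \<in> carrier_mat (Suc m) (Suc m)" and sym: "transpose_mat S = S"
    and col0: "col S 0 = e \<cdot>\<^sub>v unit_vec (Suc m) 0"
  shows "\<exists>B \<in> carrier_mat m m. transpose_mat B = B \<and>
           S = four_block_mat (mat 1 1 (\<lambda>_. e)) (0\<^sub>m 1 m) (0\<^sub>m m 1) B"
proof (intro bexI conjI)
  let ?B = "mat m m (\<lambda>(u, v). S $$ (Suc u, Suc v))"
  have Ssym: "u < Suc m \<Longrightarrow> v < Suc m \<Longrightarrow> S $$ (u, v) = S $$ (v, u)" for u v
    using arg_cong[OF sym, of "\<lambda>M. M $$ (v, u)"] S by auto
  have Scol: "u < Suc m \<Longrightarrow> S $$ (u, 0) = (if u = 0 then e else 0)" for u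
    using arg_cong[OF col0, of "\<lambda>v. v $ u"] S by auto
  show "transpose_mat ?B = ?B" using Ssym by (intro eq_matI) auto
  show "S = four_block_mat (mat 1 1 (\<lambda>_. e)) (0\<^sub>m 1 m) (0\<^sub>m m 1) ?B"
    using S Scol Ssym[of 0] by (intro eq_matI) auto
qed simp

lemma real_symmetric_deflation:
  fixes A :: "real mat"
  assumes A: "A \<in> carrier_mat (Suc m) (Suc m)" and sym: "transpose_mat A = A"
  obtains U e B where "orthonormal_mat (Suc m) U" and "B \<in> carrier_mat m m"
    and "transpose_mat B = B"
    and "transpose_mat U * A * U = four_block_mat (mat 1 1 (\<lambda>_. e)) (0\<^sub>m 1 m) (0\<^sub>m m 1) B"
proof -
  obtain e where "eigenvalue A e" using real_symmetric_has_eigenvalue[OF A sym] by auto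
  then obtain x where "eigenvector A x e" unfolding eigenvalue_def by blast
  hence x: "x \<in> carrier_vec (Suc m)" and x0: "x \<noteq> 0\<^sub>v (Suc m)" and Ax: "A *\<^sub>v x = e \<cdot>\<^sub>v x"
    unfolding eigenvector_def using A by auto
  obtain U where oU: "orthonormal_mat (Suc m) U" and cU: "col U 0 = (1 / sqrt (x \<bullet> x)) \<cdot>\<^sub>v x"
    using orthonormal_mat_completion[OF x x0] by blast
  have U: "U \<in> carrier_mat (Suc m) (Suc m)" and UtU: "transpose_mat U * U = 1\<^sub>m (Suc m)"
    using oU unfolding orthonormal_mat_def by auto
  have Ut: "transpose_mat U \<in> carrier_mat (Suc m) (Suc m)" using U by simp
  define S where "S = transpose_mat U * A * U"
  have S: "S \<in> carrier_mat (Suc m) (Suc m)" using U A unfolding S_def by auto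
  have "transpose_mat S = transpose_mat U * transpose_mat (transpose_mat U * A)"
    unfolding S_def by (rule transpose_mult[OF mult_carrier_mat[OF Ut A] U])
  also have "\<dots> = S"
    unfolding S_def transpose_mult[OF Ut A] sym using U A by simp
  finally have symS: "transpose_mat S = S" .
  have "col S 0 = (transpose_mat U * A) *\<^sub>v col U 0"
    unfolding S_def by (rule col_mult2[OF mult_carrier_mat[OF Ut A] U]) simp
  also have "\<dots> = transpose_mat U *\<^sub>v (A *\<^sub>v col U 0)"
    using U by (intro assoc_mult_mat_vec[OF Ut A] col_carrier_vec) auto
  also have "A *\<^sub>v col U 0 = e \<cdot>\<^sub>v col U 0"
    unfolding cU using A x Ax by (simp add: mult_mat_vec[OF A x] smult_smult_assoc mult.commute)
  also have "transpose_mat U *\<^sub>v (e \<cdot>\<^sub>v col U 0) = e \<cdot>\<^sub>v (transpose_mat U *\<^sub>v col U 0)"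
    by (rule mult_mat_vec[OF Ut col_carrier_vec[OF _ U]]) simp
  also have "transpose_mat U *\<^sub>v col U 0 = col (transpose_mat U * U) 0"
    by (rule col_mult2[OF Ut U, symmetric]) simp
  finally have "col S 0 = e \<cdot>\<^sub>v unit_vec (Suc m) 0" unfolding UtU by simp
  with symmetric_mat_first_col_block[OF S symS] oU that show ?thesis
    unfolding S_def by blast
qed

lemma four_block_one_conj_mat_diag:
  assumes V: "orthonormal_mat m V" and B: "B \<in> carrier_mat m m"
    and VBV: "transpose_mat V * B * V = mat_diag m g"
  defines "P \<equiv> four_block_mat (1\<^sub>m 1) (0\<^sub>m 1 m) (0\<^sub>m m 1) V"
  shows "transpose_mat P * four_block_mat (mat 1 1 (\<lambda>_. e)) (0\<^sub>m 1 m) (0\<^sub>m m 1) B * P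
           = mat_diag (Suc m) (\<lambda>k. if k = 0 then e else g (k - 1))"
proof -
  have Vc: "V \<in> carrier_mat m m" using V unfolding orthonormal_mat_def by simp
  have Pt: "transpose_mat P = four_block_mat (1\<^sub>m 1) (0\<^sub>m 1 m) (0\<^sub>m m 1) (transpose_mat V)"
    unfolding P_def
    using transpose_four_block_mat[OF one_carrier_mat zero_carrier_mat zero_carrier_mat Vc] by simp
  let ?E = "mat 1 1 (\<lambda>_. e)"
  have "transpose_mat P * four_block_mat ?E (0\<^sub>m 1 m) (0\<^sub>m m 1) B * P
      = four_block_mat (1\<^sub>m 1 * ?E) (0\<^sub>m 1 m) (0\<^sub>m m 1) (transpose_mat V * B) * P"
    unfolding Pt using Vc B by (subst mult_four_block_diag_mat) auto
  also have "\<dots> = four_block_mat (1\<^sub>m 1 * ?E * 1\<^sub>m 1) (0\<^sub>m 1 m) (0\<^sub>m m 1) (transpose_mat V * B * V)"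
    unfolding P_def using Vc B by (subst mult_four_block_diag_mat) auto
  also have "\<dots> = mat_diag (Suc m) (\<lambda>k. if k = 0 then e else g (k - 1))"
    unfolding VBV by (rule eq_matI) (auto simp: mat_diag_def)
  finally show ?thesis .
qed

lemma transpose_mult_conj_mat:
  fixes A :: "'a :: comm_semiring_0 mat"
  assumes "U \<in> carrier_mat n n" and "P \<in> carrier_mat n n" and "A \<in> carrier_mat n n"
  shows "transpose_mat (U * P) * A * (U * P) = transpose_mat P * (transpose_mat U * A * U) * P"
  using assms by (simp add: transpose_mult[of U n n P n] assoc_mult_mat[of _ n n _ n _ n])

lemma real_symmetric_orthonormal_diagonalization:
  fixes A :: "real mat"
  assumes "A \<in> carrier_mat n n" and "transpose_mat A = A"
  shows "\<exists>U f. orthonormal_mat n U \<and> transpose_mat U * A * U = mat_diag n f"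
  using assms
proof (induction n arbitrary: A)
  case 0
  then show ?case
    by (intro exI[of _ "1\<^sub>m 0"] exI[of _ undefined])
      (auto simp: orthonormal_mat_def mat_diag_def intro!: eq_matI)
next
  case (Suc m)
  obtain U e B where U: "orthonormal_mat (Suc m) U" and B: "B \<in> carrier_mat m m"
    and symB: "transpose_mat B = B"
    and UAU: "transpose_mat U * A * U = four_block_mat (mat 1 1 (\<lambda>_. e)) (0\<^sub>m 1 m) (0\<^sub>m m 1) B"
    using real_symmetric_deflation[OF Suc.prems] by blast
  obtain V g where V: "orthonormal_mat m V" and VBV: "transpose_mat V * B * V = mat_diag m g"
    using Suc.IH[OF B symB] by blast
  define P where "P = four_block_mat (1\<^sub>m 1) (0\<^sub>m 1 m) (0\<^sub>m m 1) V"
  have P: "orthonormal_mat (Suc m) P"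
    unfolding P_def by (rule orthonormal_mat_block_diag_one[OF V])
  have "transpose_mat (U * P) * A * (U * P) = mat_diag (Suc m) (\<lambda>k. if k = 0 then e else g (k - 1))"
    using transpose_mult_conj_mat[of U "Suc m" P A] U P Suc.prems(1)
      four_block_one_conj_mat_diag[OF V B VBV, of e]
    unfolding UAU P_def orthonormal_mat_def by simp
  thus ?case using orthonormal_mat_mult[OF U P] by blast
qed

lemma orthonormal_diag_similar:
  assumes A: "A \<in> carrier_mat n n" and U: "orthonormal_mat n U"
    and D: "transpose_mat U * A * U = mat_diag n f"
  shows "A = U * mat_diag n f * transpose_mat U"
proof -
  have Uc: "U \<in> carrier_mat n n" using U unfolding orthonormal_mat_def by simp
  have "U * mat_diag n f * transpose_mat U
      = (U * transpose_mat U) * A * (U * transpose_mat U)"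
    unfolding D[symmetric] using A Uc by (simp add: assoc_mult_mat[of _ n n _ n _ n])
  thus ?thesis using A orthonormal_mat_right_inverse[OF U] by simp
qed

lemma char_poly_orthonormal_diag:
  assumes A: "A \<in> carrier_mat n n" and U: "orthonormal_mat n U"
    and D: "transpose_mat U * A * U = mat_diag n f"
  shows "char_poly A = (\<Prod>x\<leftarrow>map f [0..<n]. [:- x, 1:])"
proof -
  have Uc: "U \<in> carrier_mat n n" using U unfolding orthonormal_mat_def by simp
  have "similar_mat A (mat_diag n f)"
    by (rule similar_matI[where P = U and Q = "transpose_mat U" and n = n])
      (use A Uc U orthonormal_mat_right_inverse[OF U] orthonormal_diag_similar[OF A U D]
        in \<open>auto simp: orthonormal_mat_def\<close>)
  hence "char_poly A = char_poly (mat_diag n f)" by (rule char_poly_similar)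
  also have "\<dots> = (\<Prod>x\<leftarrow>diag_mat (mat_diag n f). [:- x, 1:])"
    by (rule char_poly_upper_triangular[of _ n]) (auto simp: mat_diag_def upper_triangular_def)
  also have "diag_mat (mat_diag n f) = map f [0..<n]"
    by (rule nth_equalityI) (auto simp: diag_mat_def mat_diag_def)
  finally show ?thesis .
qed

definition trace :: "'a :: comm_semiring_0 mat \<Rightarrow> 'a" where
  "trace A = (\<Sum>i<dim_row A. A $$ (i, i))"

lemma trace_mat_diag: "trace (mat_diag n f) = (\<Sum>k<n. f k)"
  by (simp add: trace_def mat_diag_def)

lemma trace_mult_comm:
  fixes A :: "'a :: comm_semiring_0 mat"
  assumes A: "A \<in> carrier_mat n k" and B: "B \<in> carrier_mat k n"
  shows "trace (A * B) = trace (B * A)"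
proof -
  have "trace (A * B) = (\<Sum>i<n. \<Sum>j<k. A $$ (i, j) * B $$ (j, i))"
    unfolding trace_def using A B by (auto simp: scalar_prod_def atLeast0LessThan intro!: sum.cong)
  also have "\<dots> = (\<Sum>j<k. \<Sum>i<n. B $$ (j, i) * A $$ (i, j))"
    by (subst sum.swap) (simp add: mult.commute)
  also have "\<dots> = trace (B * A)"
    unfolding trace_def using A B by (auto simp: scalar_prod_def atLeast0LessThan intro!: sum.cong)
  finally show ?thesis .
qed

lemma trace_mult_symmetric:
  fixes A :: "'a :: comm_semiring_1 mat"
  assumes A: "A \<in> carrier_mat n n" and sym: "transpose_mat A = A"
  shows "trace (A * A) = (\<Sum>u<n. \<Sum>v<n. (A $$ (u, v))^2)"
proof -
  have "u < n \<Longrightarrow> v < n \<Longrightarrow> A $$ (v, u) = A $$ (u, v)" for u v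
    using arg_cong[OF sym, of "\<lambda>M. M $$ (u, v)"] A by auto
  thus ?thesis
    unfolding trace_def using A
    by (auto simp: scalar_prod_def atLeast0LessThan power2_eq_square intro!: sum.cong)
qed

lemma sum_squares_orthonormal_diag:
  fixes A :: "real mat"
  assumes A: "A \<in> carrier_mat n n" and sym: "transpose_mat A = A" and U: "orthonormal_mat n U"
    and D: "transpose_mat U * A * U = mat_diag n f"
  shows "(\<Sum>u<n. \<Sum>v<n. (A $$ (u, v))^2) = (\<Sum>k<n. (f k)^2)"
proof -
  let ?D = "mat_diag n f"
  have Uc: "U \<in> carrier_mat n n" and UtU: "transpose_mat U * U = 1\<^sub>m n"
    using U unfolding orthonormal_mat_def by auto
  have "A * A = U * (?D * (transpose_mat U * U) * ?D) * transpose_mat U"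
    unfolding orthonormal_diag_similar[OF A U D] using Uc
    by (simp add: assoc_mult_mat[of _ n n _ n _ n] mult_carrier_mat[of _ n n])
  also have "\<dots> = U * (?D * ?D) * transpose_mat U"
    unfolding UtU right_mult_one_mat[OF mat_diag_dim] ..
  finally have AA: "A * A = U * (?D * ?D) * transpose_mat U" .
  have "trace (A * A) = trace (U * (?D * ?D * transpose_mat U))"
    unfolding AA using Uc by (simp add: assoc_mult_mat[of _ n n _ n _ n])
  also have "\<dots> = trace ((?D * ?D * transpose_mat U) * U)"
    by (rule trace_mult_comm[of _ n n]) (use Uc in \<open>simp_all add: mult_carrier_mat[of _ n n]\<close>)
  also have "\<dots> = trace ((?D * ?D) * (transpose_mat U * U))"
    using Uc by (simp add: assoc_mult_mat[of _ n n _ n _ n])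
  also have "\<dots> = (\<Sum>k<n. (f k)^2)"
    unfolding UtU by (simp add: right_mult_one_mat[OF mat_diag_dim] trace_mat_diag power2_eq_square)
  finally show ?thesis using trace_mult_symmetric[OF A sym] by simp
qed

lemma mat_diag_mult_vec:
  assumes v: "v \<in> carrier_vec n"
  shows "mat_diag n f *\<^sub>v v = vec n (\<lambda>k. f k * v $ k)"
proof (rule eq_vecI)
  fix i assume "i < dim_vec (vec n (\<lambda>k. f k * v $ k))"
  hence i: "i < n" by simp
  have "(mat_diag n f *\<^sub>v v) $ i = (\<Sum>k<n. (if i = k then f k else 0) * v $ k)"
    using i v by (simp add: mat_diag_def scalar_prod_def atLeast0LessThan)
  also have "\<dots> = (\<Sum>k<n. if i = k then f k * v $ k else 0)"
    by (rule sum.cong) auto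
  also have "\<dots> = f i * v $ i" using i by simp
  finally show "(mat_diag n f *\<^sub>v v) $ i = vec n (\<lambda>k. f k * v $ k) $ i" using i by simp
qed (simp add: mat_diag_def)

lemma quadratic_form_orthonormal_diag_le:
  fixes A :: "real mat"
  assumes A: "A \<in> carrier_mat n n" and U: "orthonormal_mat n U"
    and D: "transpose_mat U * A * U = mat_diag n f"
    and le: "\<And>k. k < n \<Longrightarrow> f k \<le> \<mu>" and x: "x \<in> carrier_vec n"
  shows "x \<bullet> (A *\<^sub>v x) \<le> \<mu> * (x \<bullet> x)"
proof -
  have Uc: "U \<in> carrier_mat n n" and Ut: "transpose_mat U \<in> carrier_mat n n"
    using U unfolding orthonormal_mat_def by auto
  define w where "w = transpose_mat U *\<^sub>v x"
  have w: "w \<in> carrier_vec n" unfolding w_def using Ut x by simp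
  have "x \<bullet> (A *\<^sub>v x) = x \<bullet> (U *\<^sub>v (mat_diag n f *\<^sub>v w))"
    unfolding w_def using Uc Ut x
    by (subst orthonormal_diag_similar[OF A U D])
      (simp add: assoc_mult_mat_vec[of _ n n _ n] mult_carrier_mat[of _ n n])
  also have "\<dots> = w \<bullet> (mat_diag n f *\<^sub>v w)"
    using transpose_vec_mult_scalar[OF Uc mult_mat_vec_carrier[OF mat_diag_dim w] x]
    by (simp add: w_def)
  also have "mat_diag n f *\<^sub>v w = vec n (\<lambda>k. f k * w $ k)"
    by (rule mat_diag_mult_vec[OF w])
  also have "w \<bullet> vec n (\<lambda>k. f k * w $ k) = (\<Sum>k<n. f k * (w $ k)^2)"
    using w by (simp add: scalar_prod_def atLeast0LessThan power2_eq_square algebra_simps)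
  also have "\<dots> \<le> (\<Sum>k<n. \<mu> * (w $ k)^2)"
    by (intro sum_mono mult_right_mono le) auto
  also have "\<dots> = \<mu> * (w \<bullet> w)"
    using w by (simp add: scalar_prod_def sum_distrib_left atLeast0LessThan power2_eq_square)
  also have "w \<bullet> w = x \<bullet> x"
    unfolding w_def using transpose_vec_mult_scalar[OF Uc _ x, of "transpose_mat U *\<^sub>v x"] Uc x
    by (simp add: orthonormal_mat_right_inverse[OF U] assoc_mult_mat_vec[of _ n n _ n, symmetric])
  finally show ?thesis .
qed

section \<open>The sorted eigenvalue list of a real symmetric matrix\<close>

lemma order_prod_linear_factors:
  fixes a :: "'a :: idom"
  shows "Polynomial.order a (\<Prod>x\<leftarrow>xs. [:- x, 1:]) = count (mset xs) a"
proof (induction xs)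
  case Nil
  then show ?case by (simp add: order_0I)
next
  case (Cons y xs)
  have "(\<Prod>x\<leftarrow>xs. [:- x, 1:]) \<noteq> (0 :: 'a poly)"
    by (auto simp: prod_list_zero_iff)
  hence "Polynomial.order a ([:- y, 1:] * (\<Prod>x\<leftarrow>xs. [:- x, 1:]))
      = Polynomial.order a [:- y, 1:] + Polynomial.order a (\<Prod>x\<leftarrow>xs. [:- x, 1:])"
    by (intro order_mult) (simp only: mult_eq_0_iff de_Morgan_disj, simp)
  moreover have "Polynomial.order a [:- y, 1:] = (if a = y then 1 else 0)"
    using order_power_n_n[of a 1] order_0I[of "[:- y, 1:]" a] by auto
  ultimately show ?case using Cons by simp
qed

lemma mset_eq_of_prod_linear_factors_eq:
  fixes xs ys :: "'a :: idom list"
  assumes "(\<Prod>x\<leftarrow>xs. [:- x, 1:]) = (\<Prod>x\<leftarrow>ys. [:- x, 1:])"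
  shows "mset xs = mset ys"
  by (rule multiset_eqI) (metis assms order_prod_linear_factors)

lemma eigs_eqI:
  assumes A: "A \<in> carrier_mat n n" and len: "length ys = n"
    and cp: "char_poly A = (\<Prod>x\<leftarrow>ys. [:- x, 1:])"
  shows "eigs A = rev (sort ys)"
  unfolding eigs_def
proof (rule the_equality)
  have "(\<Prod>x\<leftarrow>rev (sort ys). [:- x, 1:]) = (\<Prod>x\<leftarrow>ys. [:- x, 1:])"
    by (simp flip: prod_mset_prod_list)
  thus "length (rev (sort ys)) = dim_row A \<and> sorted_wrt (\<ge>) (rev (sort ys)) \<and>
      char_poly A = (\<Prod>x\<leftarrow>rev (sort ys). [:- x, 1:])"
    using A len cp by (simp add: sorted_wrt_rev)
next
  fix xs assume "length xs = dim_row A \<and> sorted_wrt (\<ge>) xs \<and> char_poly A = (\<Prod>x\<leftarrow>xs. [:- x, 1:])"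
  hence "mset (rev xs) = mset ys" and "sorted (rev xs)"
    using cp mset_eq_of_prod_linear_factors_eq[of xs ys] by (auto simp: sorted_wrt_rev)
  hence "sort ys = rev xs" by (metis properties_for_sort)
  thus "xs = rev (sort ys)" by simp
qed

lemma eigs_real_symmetric:
  fixes A :: "real mat"
  assumes A: "A \<in> carrier_mat n n" and sym: "transpose_mat A = A"
  obtains U f where "orthonormal_mat n U" and "transpose_mat U * A * U = mat_diag n f"
    and "eigs A = rev (sort (map f [0..<n]))"
proof -
  obtain U f where U: "orthonormal_mat n U" and D: "transpose_mat U * A * U = mat_diag n f"
    using real_symmetric_orthonormal_diagonalization[OF A sym] by blast
  have "eigs A = rev (sort (map f [0..<n]))"
    by (rule eigs_eqI[OF A _ char_poly_orthonormal_diag[OF A U D]]) simp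
  with U D that show ?thesis by blast
qed

lemma length_eigs:
  fixes A :: "real mat"
  assumes "A \<in> carrier_mat n n" and "transpose_mat A = A"
  shows "length (eigs A) = n"
  by (rule eigs_real_symmetric[OF assms]) simp

lemma sorted_eigs:
  fixes A :: "real mat"
  assumes "A \<in> carrier_mat n n" and "transpose_mat A = A"
  shows "sorted_wrt (\<ge>) (eigs A)"
  by (rule eigs_real_symmetric[OF assms]) (simp add: sorted_wrt_rev)

lemma sum_squares_eigs:
  fixes A :: "real mat"
  assumes A: "A \<in> carrier_mat n n" and sym: "transpose_mat A = A"
  shows "(\<Sum>x\<leftarrow>eigs A. x^2) = (\<Sum>u<n. \<Sum>v<n. (A $$ (u, v))^2)"
proof (rule eigs_real_symmetric[OF A sym])
  fix U f assume U: "orthonormal_mat n U" and D: "transpose_mat U * A * U = mat_diag n f"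
    and eigs: "eigs A = rev (sort (map f [0..<n]))"
  have "(\<Sum>x\<leftarrow>eigs A. x^2) = (\<Sum>x\<leftarrow>map f [0..<n]. x^2)"
    unfolding eigs by (simp add: multiset.map_comp flip: sum_mset_sum_list)
  also have "\<dots> = (\<Sum>k<n. (f k)^2)"
    by (simp add: sum_list_sum_nth atLeast0LessThan)
  finally show ?thesis using sum_squares_orthonormal_diag[OF A sym U D] by simp
qed

lemma quadratic_form_le_first_eig:
  fixes A :: "real mat"
  assumes A: "A \<in> carrier_mat n n" and sym: "transpose_mat A = A"
    and x: "x \<in> carrier_vec n"
  shows "x \<bullet> (A *\<^sub>v x) \<le> eigs A ! 0 * (x \<bullet> x)"
proof (rule eigs_real_symmetric[OF A sym])
  fix U f assume U: "orthonormal_mat n U" and D: "transpose_mat U * A * U = mat_diag n f"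
    and eigs: "eigs A = rev (sort (map f [0..<n]))"
  have "f k \<le> eigs A ! 0" if k: "k < n" for k
  proof -
    have "f k \<in> set (eigs A)" unfolding eigs using k by simp
    then obtain l where l: "l < length (eigs A)" and "eigs A ! l = f k"
      by (auto simp: in_set_conv_nth)
    thus ?thesis
      using sorted_wrt_nth_less[OF sorted_eigs[OF A sym], of 0 l] by (cases "l = 0") auto
  qed
  thus ?thesis by (rule quadratic_form_orthonormal_diag_le[OF A U D _ x])
qed

section \<open>Spread of a decreasing list with bounded second moment\<close>

lemma sum_le_of_weighted_squares_le:
  fixes s X Y N :: real and p q :: nat
  assumes p: "0 < p" and q: "0 < q" and N: "0 \<le> N" and X: "0 \<le> X" and Y: "0 \<le> Y"
    and main: "s^2 + p * X^2 + q * Y^2 \<le> N * s"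
  shows "X + Y \<le> N / 2 * sqrt (real (p + q) / real (p * q))"
proof -
  define c where "c = real (p + q) / real (p * q)"
  have c: "c = 1 / p + 1 / q" and c0: "0 \<le> c"
    unfolding c_def using p q by (simp_all add: field_simps)
  have "0 \<le> (N / 2 - s)^2" by simp
  hence P: "p * X^2 + q * Y^2 \<le> N^2 / 4"
    using main by (simp add: power2_eq_square algebra_simps)
  have CS: "(X + Y)^2 \<le> (p * X^2 + q * Y^2) * c"
  proof -
    \<comment> \<open>Cauchy--Schwarz for the weights \<open>p, q\<close> and \<open>1/p, 1/q\<close>\<close>
    have "(p * X^2 + q * Y^2) * c - (X + Y)^2 = (p * X - q * Y)^2 / (p * q)"
      unfolding c using p q by (simp add: field_simps power2_eq_square)
    moreover have "0 \<le> (p * X - q * Y)^2 / (p * q)" by simp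
    ultimately show ?thesis by linarith
  qed
  have "(X + Y)^2 \<le> N^2 / 4 * c"
    using CS mult_right_mono[OF P c0] by linarith
  hence "X + Y \<le> sqrt (N^2 / 4 * c)"
    using real_le_rsqrt by blast
  also have "sqrt (N^2 / 4 * c) = N / 2 * sqrt c"
    using N by (simp add: real_sqrt_mult real_sqrt_divide)
  finally show ?thesis unfolding c_def .
qed

lemma max_zero_square_le: "(a :: real) \<le> b \<Longrightarrow> (max a 0)^2 \<le> b^2"
  by (cases "a \<ge> 0") (auto intro: power_mono)

lemma sum_squares_sorted_ge:
  fixes xs :: "real list"
  assumes sorted: "sorted_wrt (\<ge>) xs" and len: "length xs = n"
    and i: "1 \<le> i" and ij: "i + j + 1 < n"
  shows "(xs ! 0)^2 + real i * (max (xs ! i) 0)^2 + real (j + 1) * (max (- xs ! (n - j - 1)) 0)^2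
           \<le> (\<Sum>x\<leftarrow>xs. x^2)"
proof -
  have nth_le: "k \<le> l \<Longrightarrow> l < n \<Longrightarrow> xs ! l \<le> xs ! k" for k l
    using sorted_wrt_nth_less[OF sorted, of k l] len by (cases "k = l") auto
  have top: "k \<in> {1..i} \<Longrightarrow> (max (xs ! i) 0)^2 \<le> (xs ! k)^2" for k
    using ij by (intro max_zero_square_le nth_le) auto
  have bottom: "k \<in> {n - j - 1..<n} \<Longrightarrow> (max (- xs ! (n - j - 1)) 0)^2 \<le> (xs ! k)^2" for k
    using max_zero_square_le[of "- xs ! (n - j - 1)" "- xs ! k"] nth_le[of "n - j - 1" k] by auto
  have "real i * (max (xs ! i) 0)^2 \<le> (\<Sum>k\<in>{1..i}. (xs ! k)^2)"
    using sum_mono[of "{1..i}" "\<lambda>_. (max (xs ! i) 0)^2" "\<lambda>k. (xs ! k)^2"] top by simp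
  moreover have "real (j + 1) * (max (- xs ! (n - j - 1)) 0)^2 \<le> (\<Sum>k\<in>{n - j - 1..<n}. (xs ! k)^2)"
    using sum_mono[of "{n - j - 1..<n}" "\<lambda>_. (max (- xs ! (n - j - 1)) 0)^2" "\<lambda>k. (xs ! k)^2"]
      bottom ij by simp
  moreover have "(xs ! 0)^2 + (\<Sum>k\<in>{1..i}. (xs ! k)^2) + (\<Sum>k\<in>{n - j - 1..<n}. (xs ! k)^2)
      = (\<Sum>k\<in>{0} \<union> {1..i} \<union> {n - j - 1..<n}. (xs ! k)^2)"
    using ij by (subst sum.union_disjoint, auto)+
  moreover have "\<dots> \<le> (\<Sum>k<n. (xs ! k)^2)"
    using ij by (intro sum_mono2) auto
  moreover have "(\<Sum>x\<leftarrow>xs. x^2) = (\<Sum>k<n. (xs ! k)^2)"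
    using len by (simp add: sum_list_sum_nth atLeast0LessThan)
  ultimately show ?thesis by linarith
qed

lemma sorted_spread_le:
  fixes xs :: "real list"
  assumes sorted: "sorted_wrt (\<ge>) xs" and len: "length xs = n"
    and i: "1 \<le> i" "i < n" and j: "j < n" and N: "0 \<le> N"
    and sq: "(\<Sum>x\<leftarrow>xs. x^2) \<le> N * xs ! 0"
  shows "xs ! i - xs ! (n - j - 1) \<le> N / 2 * sqrt (real (i + j + 1) / real (i * (j + 1)))"
proof (cases "i + j + 1 < n")
  case False
  hence "xs ! i \<le> xs ! (n - j - 1)"
    using sorted_wrt_nth_less[OF sorted, of "n - j - 1" i] len i j
    by (cases "n - j - 1 = i") auto
  moreover have "0 \<le> N / 2 * sqrt (real (i + j + 1) / real (i * (j + 1)))" using N by simp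
  ultimately show ?thesis by linarith
next
  case True
  have main: "(xs ! 0)^2 + real i * (max (xs ! i) 0)^2
      + real (j + 1) * (max (- xs ! (n - j - 1)) 0)^2 \<le> N * xs ! 0"
    using sum_squares_sorted_ge[OF sorted len i(1) True] sq by linarith
  have "max (xs ! i) 0 + max (- xs ! (n - j - 1)) 0
      \<le> N / 2 * sqrt (real (i + (j + 1)) / real (i * (j + 1)))"
    by (rule sum_le_of_weighted_squares_le[OF _ _ N _ _ main]) (use i in auto)
  thus ?thesis by (simp add: add.assoc)
qed

section \<open>Adjacency matrices and the main inequality\<close>

lemma sum_squares_eigs_le_loop_graph:
  assumes G: "loop_graph_adj n A"
  shows "(\<Sum>x\<leftarrow>eigs A. x^2) \<le> real n * eigs A ! 0"
proof -
  have A: "A \<in> carrier_mat n n" and sym: "transpose_mat A = A"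
    and A01: "\<And>u v. u < n \<Longrightarrow> v < n \<Longrightarrow> A $$ (u, v) = 0 \<or> A $$ (u, v) = 1"
    using G unfolding loop_graph_adj_def by auto
  define one where "one = vec n (\<lambda>_. 1 :: real)"
  have one: "one \<in> carrier_vec n" unfolding one_def by simp
  have "(\<Sum>x\<leftarrow>eigs A. x^2) = (\<Sum>u<n. \<Sum>v<n. (A $$ (u, v))^2)"
    by (rule sum_squares_eigs[OF A sym])
  also have "\<dots> = (\<Sum>u<n. \<Sum>v<n. A $$ (u, v))"
    using A01 by (intro sum.cong refl) (auto simp: power2_eq_square)
  also have "\<dots> = one \<bullet> (A *\<^sub>v one)"
    unfolding one_def using A by (simp add: scalar_prod_def atLeast0LessThan)
  also have "\<dots> \<le> eigs A ! 0 * (one \<bullet> one)"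
    by (rule quadratic_form_le_first_eig[OF A sym one])
  also have "one \<bullet> one = real n" unfolding one_def by (simp add: scalar_prod_def)
  finally show ?thesis by (simp add: mult.commute)
qed

lemma loop_graph_spread_le:
  assumes i: "1 \<le> i" "i \<le> n - 1" and j: "j \<le> n - 1" and G: "loop_graph_adj n A"
  shows "eig A (i + 1) - eig A (n - j) \<le> real n / 2 * sqrt (real (i + j + 1) / real (i * (j + 1)))"
proof -
  have A: "A \<in> carrier_mat n n" and sym: "transpose_mat A = A"
    using G unfolding loop_graph_adj_def by auto
  have "eigs A ! i - eigs A ! (n - j - 1) \<le> real n / 2 * sqrt (real (i + j + 1) / real (i * (j + 1)))"
    using sorted_spread_le[OF sorted_eigs[OF A sym] length_eigs[OF A sym] _ _ _ _
        sum_squares_eigs_le_loop_graph[OF G]] i j by simp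
  thus ?thesis unfolding eig_def by (simp add: diff_commute)
qed

lemma finite_simple_graph_adj: "finite {A. simple_graph_adj n A}"
proof -
  let ?F = "(\<lambda>f. mat n n (\<lambda>(u, v). f u v)) ` (PiE {..<n} (\<lambda>_. PiE {..<n} (\<lambda>_. {0 :: real, 1})))"
  have "{A. simple_graph_adj n A} \<subseteq> ?F"
  proof
    fix A assume "A \<in> {A. simple_graph_adj n A}"
    hence A: "A \<in> carrier_mat n n"
      and A01: "\<And>u v. u < n \<Longrightarrow> v < n \<Longrightarrow> A $$ (u, v) = 0 \<or> A $$ (u, v) = 1"
      unfolding simple_graph_adj_def loop_graph_adj_def by auto
    define f where "f = (\<lambda>u\<in>{..<n}. \<lambda>v\<in>{..<n}. A $$ (u, v))"
    have "f \<in> PiE {..<n} (\<lambda>_. PiE {..<n} (\<lambda>_. {0 :: real, 1}))"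
      unfolding f_def using A01 by auto
    moreover have "A = mat n n (\<lambda>(u, v). f u v)"
      using A unfolding f_def by (intro eq_matI) auto
    ultimately show "A \<in> ?F" by blast
  qed
  moreover have "finite ?F" by (intro finite_imageI finite_PiE) auto
  ultimately show ?thesis by (rule finite_subset)
qed

lemma spread_n_le:
  assumes "1 \<le> i" "i \<le> n - 1" "j \<le> n - 1"
  shows "spread_n i j n \<le> real n / 2 * sqrt (real (i + j + 1) / real (i * (j + 1)))"
proof -
  have "simple_graph_adj n (0\<^sub>m n n)"
    unfolding simple_graph_adj_def loop_graph_adj_def by auto
  moreover have image: "{spread_graph i j n A | A. simple_graph_adj n A}
      = spread_graph i j n ` {A. simple_graph_adj n A}" by auto
  ultimately have "spread_n i j n \<in> spread_graph i j n ` {A. simple_graph_adj n A}"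
    unfolding spread_n_def image using finite_simple_graph_adj[of n] by (intro Max_in) auto
  then obtain A where "simple_graph_adj n A" and "spread_n i j n = spread_graph i j n A" by auto
  thus ?thesis
    using loop_graph_spread_le[OF assms] unfolding simple_graph_adj_def spread_graph_def by auto
qed

theorem theorem1p1:
  fixes n i j :: nat and A :: "real mat"
  assumes "n \<ge> 2" and "1 \<le> i" and "i \<le> n - 1" and "j \<le> n - 1"
    and "loop_graph_adj n A"
  shows "eig A (i + 1) - eig A (n - j)
           \<le> real n / 2 * sqrt (real (i + j + 1) / real (i * (j + 1))) \<and>
         (\<forall>L. ((\<lambda>m. spread_n i j m / real m) \<longlonglongrightarrow> L) \<longrightarrow>
           L \<le> 1 / 2 * sqrt (real (i + j + 1) / real (i * (j + 1))))"
proof (intro conjI allI impI)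
  show "eig A (i + 1) - eig A (n - j) \<le> real n / 2 * sqrt (real (i + j + 1) / real (i * (j + 1)))"
    using loop_graph_spread_le assms by blast
  fix L assume lim: "(\<lambda>m. spread_n i j m / real m) \<longlonglongrightarrow> L"
  show "L \<le> 1 / 2 * sqrt (real (i + j + 1) / real (i * (j + 1)))"
  proof (rule LIMSEQ_le_const2[OF lim], intro exI[of _ "i + j + 1"] allI impI)
    fix m assume m: "i + j + 1 \<le> m"
    hence "spread_n i j m \<le> real m / 2 * sqrt (real (i + j + 1) / real (i * (j + 1)))"
      using spread_n_le[of i m j] assms(2) by auto
    moreover have "real m > 0" using m by simp
    ultimately show "spread_n i j m / real m \<le> 1 / 2 * sqrt (real (i + j + 1) / real (i * (j + 1)))"
      by (simp add: divide_le_eq mult.commute)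
  qed
qed

end
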